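(* Let $H:\mathbb{R}\times\mathbb{R}^2\to\mathbb{R}^2$, $H(p,x)=(x_1-p,\,-x_2+x_2^2)$, $g:\mathbb{R}^2\to\mathbb{R}^2$, $g(x)=(0.5x_1-0.5x_1^2-x_2,\ 0.5x_1-0.5x_1^2+x_2)$, $D=\mathbb{R}^2_-$, $\Gamma=g^{-1}(D)$, and $S(p)=\{x\in\mathbb{R}^2\mid 0\in H(p,x)+\hat N_\Gamma(x)\}$. Then $S$ has the Aubin property around $(\bar p,\bar x)=(0,(0,0))$, and for every $q\in\mathbb{R}$, $DS(0,(0,0))(q)$ is the set of $u\in\mathbb{R}^2$ for which there exists $\xi\in\mathbb{R}^2$ with $$0=\begin{pmatrix}-q\\0\end{pmatrix}+\begin{pmatrix}u_1\\-u_2\end{pmatrix}+\begin{pmatrix}0.5&0.5\\-1&1\end{pmatrix}\xi,\qquad \xi\in N_{\mathbb{R}^2_-}\!\begin{pmatrix}0.5u_1-u_2\\0.5u_1+u_2\end{pmatrix}.$$ Explicitly, for $q\le0$ this set is $\{(q,0),(\tfrac43q,-\tfrac23q),(\tfrac43q,\tfrac23q)\}$ and for $q\ge0$ it is $\{(0,0)\}$.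
   Context: $\hat N_\Gamma$ is the regular (Fréchet) normal cone $\hat N_\Gamma(x)=(T_\Gamma(x))^\circ$ with $T_\Gamma(x)=\limsup_{t\searrow0}(\Gamma-x)/t$, and $\hat N_\Gamma(x)=\emptyset$ for $x\notin\Gamma$. $N_{\mathbb{R}^2_-}$ is the convex-analysis normal cone (empty outside $\mathbb{R}^2_-$). Aubin property of $S$ around $(\bar p,\bar x)$: there exist neighborhoods $U$ of $\bar p$, $V$ of $\bar x$ and $\kappa>0$ with $S(p_1)\cap V\subset S(p_2)+\kappa|p_1-p_2|\mathbb{B}$ for all $p_1,p_2\in U$. $DS(\bar p,\bar x)(q)=\{u\mid (q,u)\in T_{\operatorname{gph}S}(\bar p,\bar x)\}$ is the graphical derivative. *)

theory Defs
  imports "HOL-Analysis.Analysis"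
begin

text \<open>Bouligand (contingent) tangent cone, i.e. the outer limit
  limsup_{t \<searrow> 0} (\<Gamma> - x)/t, in its sequential form.\<close>
definition tangent_cone :: "'a::real_normed_vector set \<Rightarrow> 'a \<Rightarrow> 'a set" where
  "tangent_cone \<Gamma> x = {u. \<exists>t::nat \<Rightarrow> real. \<exists>w::nat \<Rightarrow> 'a.
      (\<forall>k. 0 < t k) \<and> t \<longlonglongrightarrow> 0 \<and> w \<longlonglongrightarrow> u \<and> (\<forall>k. w k \<in> (\<lambda>y. (1 / t k) *\<^sub>R (y - x)) ` \<Gamma>)}"

definition regular_normal_cone :: "'a::real_inner set \<Rightarrow> 'a \<Rightarrow> 'a set" where
  "regular_normal_cone \<Gamma> x =
     (if x \<in> \<Gamma> then {v. \<forall>u \<in> tangent_cone \<Gamma> x. inner v u \<le> 0} else {})"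

definition convex_normal_cone :: "'a::real_inner set \<Rightarrow> 'a \<Rightarrow> 'a set" where
  "convex_normal_cone C y =
     (if y \<in> C then {v. \<forall>z \<in> C. inner v (z - y) \<le> 0} else {})"

definition nonpos_orthant :: "(real \<times> real) set" where
  "nonpos_orthant = {y. fst y \<le> 0 \<and> snd y \<le> 0}"

definition graph_of :: "('a \<Rightarrow> 'b set) \<Rightarrow> ('a \<times> 'b) set" where
  "graph_of S = {(p, x). x \<in> S p}"

definition graphical_derivative ::
  "('a::real_normed_vector \<Rightarrow> 'b::real_normed_vector set) \<Rightarrow> 'a \<Rightarrow> 'b \<Rightarrow> 'a \<Rightarrow> 'b set" where
  "graphical_derivative S p x q = {u. (q, u) \<in> tangent_cone (graph_of S) (p, x)}"

definition aubin_property ::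
  "('a::real_normed_vector \<Rightarrow> 'b::real_normed_vector set) \<Rightarrow> 'a \<Rightarrow> 'b \<Rightarrow> bool" where
  "aubin_property S pb xb \<longleftrightarrow> (\<exists>U V \<kappa>. open U \<and> pb \<in> U \<and> open V \<and> xb \<in> V \<and> \<kappa> > 0 \<and>
      (\<forall>p1 \<in> U. \<forall>p2 \<in> U. \<forall>x \<in> S p1 \<inter> V.
         \<exists>y \<in> S p2. norm (x - y) \<le> \<kappa> * norm (p1 - p2)))"

definition H9 :: "real \<Rightarrow> real \<times> real \<Rightarrow> real \<times> real" where
  "H9 p x = (fst x - p, - snd x + (snd x)^2)"

definition g9 :: "real \<times> real \<Rightarrow> real \<times> real" where
  "g9 x = (0.5 * fst x - 0.5 * (fst x)^2 - snd x, 0.5 * fst x - 0.5 * (fst x)^2 + snd x)"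

definition Gamma9 :: "(real \<times> real) set" where
  "Gamma9 = g9 -` nonpos_orthant"

definition S9 :: "real \<Rightarrow> (real \<times> real) set" where
  "S9 p = {x. (0, 0) \<in> (\<lambda>v. H9 p x + v) ` regular_normal_cone Gamma9 x}"

end

theory Submission
  imports Defs
begin

text \<open>The set \<Gamma> is cut out by the two components of g, and its tangent cone is given by the
  linearized active constraints. Hence, near the origin, S(p) consists of the point (min p 0, 0) and
  of two curves a \<mapsto> (-a, \<plusminus>(a + a^2)/2), a > 0, on each of which one constraint is active and the
  multiplier rule determines p as a function of a close to -3a/4. Inverting these
  parametrizations with a Lipschitz bound gives the Aubin property.
  The graphical derivative consists of the tangent directions of the three pieces: (min q 0, 0)
  and, for q \<le> 0, the tangent rays (4/3 q, \<plusminus>2/3 q) of the curves; no other direction occurs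
  because every solution near the origin is within a quadratic distance of one of these rays.
  The normal cone system is then solved by complementarity case analysis.\<close>

section \<open>Tangent cones and graphical derivatives\<close>

lemma tangent_cone_iff:
  "u \<in> tangent_cone \<Gamma> x \<longleftrightarrow> (\<exists>t w. (\<forall>k. 0 < t k) \<and> t \<longlonglongrightarrow> 0 \<and> w \<longlonglongrightarrow> u \<and>
     (\<forall>k. x + t k *\<^sub>R w k \<in> \<Gamma>))"
proof -
  have scaled: "w \<in> (\<lambda>y. (1 / s) *\<^sub>R (y - x)) ` \<Gamma> \<longleftrightarrow> x + s *\<^sub>R w \<in> \<Gamma>" if "0 < s" for s w
  proof
    assume "w \<in> (\<lambda>y. (1 / s) *\<^sub>R (y - x)) ` \<Gamma>"
    then obtain y where "y \<in> \<Gamma>" "w = (1 / s) *\<^sub>R (y - x)" by blast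
    with that show "x + s *\<^sub>R w \<in> \<Gamma>" by simp
  next
    assume "x + s *\<^sub>R w \<in> \<Gamma>"
    moreover have "w = (1 / s) *\<^sub>R (x + s *\<^sub>R w - x)" using that by simp
    ultimately show "w \<in> (\<lambda>y. (1 / s) *\<^sub>R (y - x)) ` \<Gamma>" by blast
  qed
  show ?thesis
  proof
    assume "u \<in> tangent_cone \<Gamma> x"
    then obtain t w where "\<forall>k. 0 < t k" "t \<longlonglongrightarrow> 0" "w \<longlonglongrightarrow> u"
      "\<forall>k. w k \<in> (\<lambda>y. (1 / t k) *\<^sub>R (y - x)) ` \<Gamma>"
      unfolding tangent_cone_def by blast
    then show "\<exists>t w. (\<forall>k. 0 < t k) \<and> t \<longlonglongrightarrow> 0 \<and> w \<longlonglongrightarrow> u \<and> (\<forall>k. x + t k *\<^sub>R w k \<in> \<Gamma>)"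
      using scaled by blast
  next
    assume "\<exists>t w. (\<forall>k. 0 < t k) \<and> t \<longlonglongrightarrow> 0 \<and> w \<longlonglongrightarrow> u \<and> (\<forall>k. x + t k *\<^sub>R w k \<in> \<Gamma>)"
    then obtain t w where "\<forall>k. 0 < t k" "t \<longlonglongrightarrow> 0" "w \<longlonglongrightarrow> u" "\<forall>k. x + t k *\<^sub>R w k \<in> \<Gamma>"
      by blast
    then show "u \<in> tangent_cone \<Gamma> x" unfolding tangent_cone_def using scaled by blast
  qed
qed

lemma tangent_cone_ray:
  assumes "0 < \<delta>" and "\<And>t. 0 < t \<Longrightarrow> t < \<delta> \<Longrightarrow> x + t *\<^sub>R u \<in> \<Gamma>"
  shows "u \<in> tangent_cone \<Gamma> x"
  unfolding tangent_cone_iff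
proof (intro exI conjI allI)
  let ?t = "\<lambda>k. \<delta> / real (k + 2)"
  show "0 < ?t k" for k using assms(1) by simp
  show "?t \<longlonglongrightarrow> 0" using LIMSEQ_ignore_initial_segment[OF lim_const_over_n] .
  show "x + ?t k *\<^sub>R u \<in> \<Gamma>" for k
    using assms(1) by (intro assms(2)) (simp_all add: field_simps add_pos_nonneg)
qed simp

lemma quadratic_ray_nonpos:
  fixes f :: "'a::real_vector \<Rightarrow> real"
  assumes expand: "\<And>t. f (x + t *\<^sub>R u) = f x + t * d - t\<^sup>2 * c" and "0 \<le> c"
    and "f x \<le> 0" and "f x < 0 \<or> d < 0"
  shows "\<exists>\<delta>>0. \<forall>t. 0 < t \<longrightarrow> t < \<delta> \<longrightarrow> f (x + t *\<^sub>R u) \<le> 0"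
proof -
  define \<delta> where "\<delta> = (if d < 0 then 1 else - f x / (\<bar>d\<bar> + 1))"
  have "0 < \<delta>" using assms(4) divide_pos_pos[of "- f x" "\<bar>d\<bar> + 1"] by (auto simp: \<delta>_def)
  moreover have "f (x + t *\<^sub>R u) \<le> 0" if "0 < t" "t < \<delta>" for t
  proof -
    have "t * d \<le> - f x"
    proof (cases "d < 0")
      case True
      then have "t * d < 0" using that by (simp add: mult_pos_neg)
      then show ?thesis using assms(3) by linarith
    next
      case False
      then have "t * d \<le> \<delta> * (\<bar>d\<bar> + 1)" using that by (intro mult_mono) auto
      also have "\<dots> = - f x" using False by (simp add: \<delta>_def)
      finally show ?thesis .
    qed
    moreover have "0 \<le> t\<^sup>2 * c" using \<open>0 \<le> c\<close> by simp
    ultimately show ?thesis by (simp add: expand)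
  qed
  ultimately show ?thesis by blast
qed

lemma tangent_cone_active_constraint:
  fixes f :: "'a::real_normed_vector \<Rightarrow> real"
  assumes u: "u \<in> tangent_cone \<Gamma> x" and sub: "\<Gamma> \<subseteq> {y. f y \<le> 0}" and "f x = 0"
    and expand: "\<And>t v. f (x + t *\<^sub>R v) = t * D v - t\<^sup>2 * Q v"
    and "isCont D u" "isCont Q u"
  shows "D u \<le> 0"
proof -
  obtain t w where t: "\<And>k. 0 < t k" "t \<longlonglongrightarrow> 0" and w: "w \<longlonglongrightarrow> u"
    and mem: "\<And>k. x + t k *\<^sub>R w k \<in> \<Gamma>"
    using u unfolding tangent_cone_iff by blast
  have "t k * D (w k) \<le> t k * (t k * Q (w k))" for k
    using sub mem[of k] by (auto simp: expand power2_eq_square)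
  then have "D (w k) \<le> t k * Q (w k)" for k using t(1) by (simp add: mult_le_cancel_left)
  moreover have D: "(\<lambda>k. D (w k)) \<longlonglongrightarrow> D u" and "(\<lambda>k. Q (w k)) \<longlonglongrightarrow> Q u"
    using assms(5,6) w by (auto intro: isCont_tendsto_compose)
  then have "(\<lambda>k. t k * Q (w k)) \<longlonglongrightarrow> 0 * Q u" using t(2) by (intro tendsto_mult)
  ultimately show ?thesis using LIMSEQ_le[OF D] by fastforce
qed

lemma graphical_derivative_iff:
  "u \<in> graphical_derivative S p x q \<longleftrightarrow> (\<exists>t P X. (\<forall>k. 0 < t k) \<and> t \<longlonglongrightarrow> 0 \<and>
     (\<lambda>k. (1 / t k) *\<^sub>R (P k - p)) \<longlonglongrightarrow> q \<and> (\<lambda>k. (1 / t k) *\<^sub>R (X k - x)) \<longlonglongrightarrow> u \<and>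
     (\<forall>k. X k \<in> S (P k)))"
proof
  assume "u \<in> graphical_derivative S p x q"
  then obtain t w where t: "\<forall>k. 0 < t k" "t \<longlonglongrightarrow> 0" and w: "w \<longlonglongrightarrow> (q, u)"
    and mem: "\<forall>k. (p, x) + t k *\<^sub>R w k \<in> graph_of S"
    unfolding graphical_derivative_def tangent_cone_iff by blast
  let ?P = "\<lambda>k. p + t k *\<^sub>R fst (w k)" and ?X = "\<lambda>k. x + t k *\<^sub>R snd (w k)"
  have "t k \<noteq> 0" for k using t(1) by (metis less_irrefl)
  then have "(\<lambda>k. (1 / t k) *\<^sub>R (?P k - p)) = (\<lambda>k. fst (w k))"
    "(\<lambda>k. (1 / t k) *\<^sub>R (?X k - x)) = (\<lambda>k. snd (w k))" by simp_all
  moreover have "?X k \<in> S (?P k)" for k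
    using mem[rule_format, of k] by (cases "w k") (simp add: graph_of_def)
  ultimately show "\<exists>t P X. (\<forall>k. 0 < t k) \<and> t \<longlonglongrightarrow> 0 \<and>
     (\<lambda>k. (1 / t k) *\<^sub>R (P k - p)) \<longlonglongrightarrow> q \<and> (\<lambda>k. (1 / t k) *\<^sub>R (X k - x)) \<longlonglongrightarrow> u \<and>
     (\<forall>k. X k \<in> S (P k))"
    using t tendsto_fst[OF w] tendsto_snd[OF w] by (intro exI[of _ t] exI[of _ ?P] exI[of _ ?X]) auto
next
  assume "\<exists>t P X. (\<forall>k. 0 < t k) \<and> t \<longlonglongrightarrow> 0 \<and>
     (\<lambda>k. (1 / t k) *\<^sub>R (P k - p)) \<longlonglongrightarrow> q \<and> (\<lambda>k. (1 / t k) *\<^sub>R (X k - x)) \<longlonglongrightarrow> u \<and>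
     (\<forall>k. X k \<in> S (P k))"
  then obtain t P X where t: "\<forall>k. 0 < t k" "t \<longlonglongrightarrow> 0"
    and lim: "(\<lambda>k. (1 / t k) *\<^sub>R (P k - p)) \<longlonglongrightarrow> q" "(\<lambda>k. (1 / t k) *\<^sub>R (X k - x)) \<longlonglongrightarrow> u"
    and mem: "\<forall>k. X k \<in> S (P k)" by blast
  let ?w = "\<lambda>k. ((1 / t k) *\<^sub>R (P k - p), (1 / t k) *\<^sub>R (X k - x))"
  have "(p, x) + t k *\<^sub>R ?w k = (P k, X k)" for k using t(1) by (simp add: less_imp_neq[symmetric])
  then have "\<forall>k. (p, x) + t k *\<^sub>R ?w k \<in> graph_of S" using mem by (simp add: graph_of_def)
  then show "u \<in> graphical_derivative S p x q"
    unfolding graphical_derivative_def tangent_cone_iff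
    using t tendsto_Pair[OF lim] by blast
qed

lemma graphical_derivative_ray:
  assumes "\<And>t. 0 < t \<Longrightarrow> x + t *\<^sub>R u \<in> S (p + t *\<^sub>R q)"
  shows "u \<in> graphical_derivative S p x q"
proof -
  let ?t = "\<lambda>k. inverse (real (Suc k))"
  have "x + ?t k *\<^sub>R u \<in> S (p + ?t k *\<^sub>R q)" for k using assms by simp
  then show ?thesis unfolding graphical_derivative_iff
    using LIMSEQ_inverse_real_of_nat
    by (intro exI[of _ ?t] exI[of _ "\<lambda>k. p + ?t k *\<^sub>R q"] exI[of _ "\<lambda>k. x + ?t k *\<^sub>R u"]) simp
qed

section \<open>The constraint set and the solution map\<close>

text \<open>The components of g, indexed by \<sigma> \<in> {-1, 1} so that both constraints are handled at once.\<close>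

definition g9c :: "real \<Rightarrow> real \<times> real \<Rightarrow> real" where
  "g9c \<sigma> x = fst x / 2 - (fst x)\<^sup>2 / 2 + \<sigma> * snd x"

definition dg9c :: "real \<Rightarrow> real \<times> real \<Rightarrow> real \<times> real \<Rightarrow> real" where
  "dg9c \<sigma> x u = (1/2 - fst x) * fst u + \<sigma> * snd u"

lemma g9_eq: "g9 x = (g9c (-1) x, g9c 1 x)"
  by (simp add: g9_def g9c_def power2_eq_square)

lemma mem_Gamma9_iff: "x \<in> Gamma9 \<longleftrightarrow> g9c (-1) x \<le> 0 \<and> g9c 1 x \<le> 0"
  by (simp add: Gamma9_def nonpos_orthant_def g9_eq)

lemma Gamma9_subset_sublevel: "\<sigma> \<in> {-1, 1} \<Longrightarrow> Gamma9 \<subseteq> {y. g9c \<sigma> y \<le> 0}"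
  by (auto simp: mem_Gamma9_iff)

lemma g9c_expand: "g9c \<sigma> (x + t *\<^sub>R u) = g9c \<sigma> x + t * dg9c \<sigma> x u - t\<^sup>2 * ((fst u)\<^sup>2 / 2)"
  by (simp add: g9c_def dg9c_def power2_eq_square) (simp add: field_simps)

lemma tangent_cone_Gamma9I:
  assumes "x \<in> Gamma9" and "\<And>\<sigma>. \<sigma> \<in> {-1, 1} \<Longrightarrow> g9c \<sigma> x < 0 \<or> dg9c \<sigma> x u < 0"
  shows "u \<in> tangent_cone Gamma9 x"
proof -
  have "\<exists>\<delta>>0. \<forall>t. 0 < t \<longrightarrow> t < \<delta> \<longrightarrow> g9c \<sigma> (x + t *\<^sub>R u) \<le> 0" if "\<sigma> \<in> {-1, 1}" for \<sigma>
    using assms that by (intro quadratic_ray_nonpos[OF g9c_expand]) (auto simp: mem_Gamma9_iff)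
  then obtain \<delta>1 \<delta>2 where "0 < \<delta>1" "\<forall>t. 0 < t \<longrightarrow> t < \<delta>1 \<longrightarrow> g9c (-1) (x + t *\<^sub>R u) \<le> 0"
    and "0 < \<delta>2" "\<forall>t. 0 < t \<longrightarrow> t < \<delta>2 \<longrightarrow> g9c 1 (x + t *\<^sub>R u) \<le> 0"
    by (metis insertI1 insertI2)
  then show ?thesis by (intro tangent_cone_ray[of "min \<delta>1 \<delta>2"]) (auto simp: mem_Gamma9_iff)
qed

lemma tangent_cone_Gamma9_active:
  assumes "u \<in> tangent_cone Gamma9 x" "\<sigma> \<in> {-1, 1}" "g9c \<sigma> x = 0"
  shows "dg9c \<sigma> x u \<le> 0"
proof (rule tangent_cone_active_constraint[OF assms(1) Gamma9_subset_sublevel[OF assms(2)] assms(3)])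
  show "g9c \<sigma> (x + t *\<^sub>R v) = t * dg9c \<sigma> x v - t\<^sup>2 * ((fst v)\<^sup>2 / 2)" for t v
    using assms(3) by (simp add: g9c_expand)
  show "isCont (dg9c \<sigma> x) u" "isCont (\<lambda>v. (fst v)\<^sup>2 / 2) u"
    unfolding dg9c_def by (auto intro!: continuous_intros)
qed

lemma tangent_cone_Gamma9_origin: "u \<in> tangent_cone Gamma9 (0, 0) \<Longrightarrow> fst u \<le> 0"
  using tangent_cone_Gamma9_active[of u "(0, 0)" "-1"] tangent_cone_Gamma9_active[of u "(0, 0)" 1]
  by (simp add: g9c_def dg9c_def)

lemma mem_S9_iff: "x \<in> S9 p \<longleftrightarrow> x \<in> Gamma9 \<and>
   (\<forall>u \<in> tangent_cone Gamma9 x. (p - fst x) * fst u + (snd x - (snd x)\<^sup>2) * snd u \<le> 0)"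
proof -
  have "(0, 0) \<in> (\<lambda>v. H9 p x + v) ` N \<longleftrightarrow> (p - fst x, snd x - (snd x)\<^sup>2) \<in> N" for N
  proof -
    have "(0, 0) = H9 p x + v \<longleftrightarrow> v = (p - fst x, snd x - (snd x)\<^sup>2)" for v
      by (cases v) (auto simp: H9_def)
    then show ?thesis by (simp add: image_iff)
  qed
  then show ?thesis unfolding S9_def regular_normal_cone_def by (auto simp: inner_prod_def)
qed

lemma min_zero_mem_S9: "(min p 0, 0) \<in> S9 p"
proof (cases "0 \<le> p")
  case True
  then show ?thesis using tangent_cone_Gamma9_origin
    by (auto simp: mem_S9_iff mem_Gamma9_iff g9c_def intro: mult_nonneg_nonpos)
next
  case False
  then show ?thesis
    by (auto simp: mem_S9_iff mem_Gamma9_iff g9c_def power2_eq_square intro: mult_nonneg_nonneg)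
qed

section \<open>Solutions near the origin\<close>

text \<open>For \<sigma> \<in> {-1, 1} and small a > 0, branch_point \<sigma> a is the solution at which exactly the
  constraint g9c \<sigma> is active; branch_mult \<sigma> a is its multiplier and branch_param \<sigma> a the
  parameter p at which it solves the inclusion.\<close>

definition branch_height :: "real \<Rightarrow> real" where
  "branch_height a = (a + a\<^sup>2) / 2"

definition branch_point :: "real \<Rightarrow> real \<Rightarrow> real \<times> real" where
  "branch_point \<sigma> a = (- a, \<sigma> * branch_height a)"

definition branch_mult :: "real \<Rightarrow> real \<Rightarrow> real" where
  "branch_mult \<sigma> a = branch_height a - \<sigma> * (branch_height a)\<^sup>2"

definition branch_param :: "real \<Rightarrow> real \<Rightarrow> real" where
  "branch_param \<sigma> a = - a + branch_mult \<sigma> a * (1/2 + a)"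

lemma g9c_branch_point:
  assumes "\<sigma> \<in> {-1, 1}"
  shows "g9c \<sigma> (branch_point \<sigma> a) = 0" "g9c (- \<sigma>) (branch_point \<sigma> a) = - 2 * branch_height a"
  using assms by (auto simp: g9c_def branch_point_def branch_height_def field_simps)

lemma branch_height_nonneg: "0 \<le> a \<Longrightarrow> 0 \<le> branch_height a"
  by (simp add: branch_height_def)

lemma branch_mult_nonneg:
  assumes "\<sigma> \<in> {-1, 1}" "0 \<le> a" "a \<le> 1/2"
  shows "0 \<le> branch_mult \<sigma> a"
proof -
  have "a\<^sup>2 \<le> 1/4" using assms(2,3) power_mono[of a "1/2" 2] by (simp add: power2_eq_square)
  then have h: "0 \<le> branch_height a" "branch_height a \<le> 1"
    using assms(2,3) by (auto simp: branch_height_def)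
  then have "(branch_height a)\<^sup>2 \<le> branch_height a"
    using mult_left_le[OF h(2) h(1)] by (simp add: power2_eq_square)
  moreover have "0 \<le> branch_height a + (branch_height a)\<^sup>2" by (intro add_nonneg_nonneg h(1) zero_le_power2)
  ultimately show ?thesis using assms(1) by (auto simp: branch_mult_def)
qed

lemma branch_point_mem_S9:
  assumes \<sigma>: "\<sigma> \<in> {-1, 1}" and a: "0 \<le> a" "a \<le> 1/2"
  shows "branch_point \<sigma> a \<in> S9 (branch_param \<sigma> a)"
  unfolding mem_S9_iff
proof (intro conjI ballI)
  let ?x = "branch_point \<sigma> a"
  show "?x \<in> Gamma9"
    using g9c_branch_point[OF \<sigma>] branch_height_nonneg[OF a(1)] \<sigma>
    by (auto simp: mem_Gamma9_iff)
  fix u assume "u \<in> tangent_cone Gamma9 ?x"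
  then have "dg9c \<sigma> ?x u \<le> 0" using tangent_cone_Gamma9_active \<sigma> g9c_branch_point(1) by blast
  moreover have "(branch_param \<sigma> a - fst ?x) * fst u + (snd ?x - (snd ?x)\<^sup>2) * snd u
      = branch_mult \<sigma> a * dg9c \<sigma> ?x u"
    using \<sigma> by (auto simp: branch_param_def branch_point_def branch_mult_def dg9c_def algebra_simps
        power2_eq_square)
  ultimately show "(branch_param \<sigma> a - fst ?x) * fst u + (snd ?x - (snd ?x)\<^sup>2) * snd u \<le> 0"
    using branch_mult_nonneg[OF \<sigma> a] by (simp add: mult_nonneg_nonpos)
qed

lemma real_linear_bounded_above_eq_0:
  fixes b c :: real
  assumes "\<And>s. s * b \<le> c" shows "b = 0"
proof (rule ccontr)
  assume "b \<noteq> 0"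
  then have "((\<bar>c\<bar> + 1) / b) * b = \<bar>c\<bar> + 1" by simp
  with assms[of "(\<bar>c\<bar> + 1) / b"] show False by linarith
qed

lemma S9_inactive:
  assumes "x \<in> S9 p" "g9c (-1) x < 0" "g9c 1 x < 0" "fst x < 1" "\<bar>snd x\<bar> < 1"
  shows "x = (p, 0)" "p < 0"
proof -
  have "(p - fst x) * fst u + (snd x - (snd x)\<^sup>2) * snd u \<le> 0" for u
    using assms(1-3) by (auto simp: mem_S9_iff intro!: tangent_cone_Gamma9I)
  from this[of "(1, 0)"] this[of "(-1, 0)"] this[of "(0, 1)"] this[of "(0, -1)"]
  have p: "p = fst x" and "snd x * (1 - snd x) = 0" by (auto simp: power2_eq_square algebra_simps)
  then have "snd x = 0" using assms(5) by auto
  then show "x = (p, 0)" using p by (simp add: prod_eq_iff)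
  have "fst x * (1 - fst x) < 0" using assms(2) \<open>snd x = 0\<close> by (simp add: g9c_def power2_eq_square algebra_simps)
  then show "p < 0" using p assms(4) by (simp add: mult_less_0_iff)
qed

lemma S9_one_active:
  assumes x: "x \<in> S9 p" and \<sigma>: "\<sigma> \<in> {-1, 1}" and "g9c \<sigma> x = 0" "g9c (- \<sigma>) x < 0" "fst x < 1"
  shows "x = branch_point \<sigma> (- fst x)" "p = branch_param \<sigma> (- fst x)" "0 < - fst x"
proof -
  obtain x1 x2 where xx: "x = (x1, x2)" by (cases x)
  define c where "c = 1/2 - x1"
  have \<sigma>\<sigma>: "\<sigma> * \<sigma> = 1" using \<sigma> by auto
  have x2: "x2 = \<sigma> * branch_height (- x1)"
    using assms(3) \<sigma> by (auto simp: xx g9c_def branch_height_def field_simps)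
  show "x = branch_point \<sigma> (- fst x)" using x2 by (simp add: xx branch_point_def)
  \<comment> \<open>Descent directions of the active constraint sweep a whole line orthogonal to its
    gradient (c, \<sigma>), so the normal vector has to be parallel to that gradient.\<close>
  have probe: "(p - x1) * (- c + s * \<sigma>) + (x2 - x2\<^sup>2) * (- \<sigma> - s * c) \<le> 0" for s
  proof -
    have "dg9c \<sigma> x (- c + s * \<sigma>, - \<sigma> - s * c) = - (c\<^sup>2 + 1)"
      using \<sigma>\<sigma> by (simp add: dg9c_def xx c_def power2_eq_square algebra_simps) (simp add: field_simps)
    also have "\<dots> < 0" using zero_le_power2[of c] by linarith
    finally have "(- c + s * \<sigma>, - \<sigma> - s * c) \<in> tangent_cone Gamma9 x"
      using x assms(4) \<sigma> by (intro tangent_cone_Gamma9I) (auto simp: mem_S9_iff)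
    then show ?thesis using x by (auto simp: mem_S9_iff xx)
  qed
  have "s * ((p - x1) * \<sigma> - (x2 - x2\<^sup>2) * c) \<le> (p - x1) * c + (x2 - x2\<^sup>2) * \<sigma>" for s
    using probe[of s] by (simp add: algebra_simps)
  then have "(p - x1) * \<sigma> = (x2 - x2\<^sup>2) * c" using real_linear_bounded_above_eq_0 by fastforce
  then have "p - x1 = \<sigma> * (x2 - x2\<^sup>2) * c" using \<sigma>\<sigma>
    by (metis mult.commute mult.left_commute mult_1)
  then show "p = branch_param \<sigma> (- fst x)"
    using \<sigma> x2 by (auto simp: xx c_def branch_param_def branch_mult_def algebra_simps power2_eq_square)
  have "0 < branch_height (- x1)"
    using assms(4) g9c_branch_point(2)[OF \<sigma>, of "- x1"] \<open>x = branch_point \<sigma> (- fst x)\<close>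
    by (simp add: xx)
  then have "0 < (- x1) * (1 - x1)" by (simp add: branch_height_def power2_eq_square algebra_simps)
  then show "0 < - fst x" using assms(5) by (simp add: xx mult_less_0_iff)
qed

lemma S9_both_active:
  assumes "x \<in> S9 p" "g9c (-1) x = 0" "g9c 1 x = 0" "fst x < 1/2"
  shows "x = (0, 0)" "0 \<le> p"
proof -
  have "2 * snd x = g9c 1 x - g9c (-1) x" by (simp add: g9c_def)
  then have "snd x = 0" using assms(2,3) by simp
  moreover have "fst x * (1 - fst x) = 0"
    using assms(3) \<open>snd x = 0\<close> by (simp add: g9c_def power2_eq_square algebra_simps)
  ultimately show x: "x = (0, 0)" using assms(4) by (simp add: prod_eq_iff)
  have "(-1, 0) \<in> tangent_cone Gamma9 x"
    using assms(1) by (intro tangent_cone_Gamma9I) (auto simp: mem_S9_iff x dg9c_def)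
  then show "0 \<le> p" using assms(1) by (auto simp: mem_S9_iff x)
qed

lemma S9_near_origin_cases:
  assumes "x \<in> S9 p" "norm x < 1/10"
  obtains "x = (min p 0, 0)"
    | \<sigma> a where "\<sigma> \<in> {-1, 1}" "0 < a" "a < 1/10" "x = branch_point \<sigma> a" "p = branch_param \<sigma> a"
proof -
  have g: "g9c (-1) x \<le> 0" "g9c 1 x \<le> 0" using assms(1) by (auto simp: mem_S9_iff mem_Gamma9_iff)
  have "\<bar>fst x\<bar> < 1/10" "\<bar>snd x\<bar> < 1/10"
    using assms(2) norm_fst_le[of "fst x" "snd x"] norm_snd_le[of "snd x" "fst x"] by auto
  then have bounds: "fst x < 1/2" "\<bar>snd x\<bar> < 1" "- fst x < 1/10" by auto
  consider "g9c (-1) x < 0" "g9c 1 x < 0" | "g9c (-1) x = 0" "g9c 1 x = 0"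
    | \<sigma> where "\<sigma> \<in> {-1, 1}" "g9c \<sigma> x = 0" "g9c (- \<sigma>) x < 0"
    using g by (metis insertI1 insertI2 minus_minus order.not_eq_order_implies_strict)
  then show ?thesis
  proof cases
    case 1 then show ?thesis using S9_inactive[OF assms(1)] bounds that(1) by auto
  next
    case 2 then show ?thesis using S9_both_active[OF assms(1)] bounds that(1) by auto
  next
    case (3 \<sigma>)
    then show ?thesis using S9_one_active[OF assms(1) 3] bounds that(2)[of \<sigma> "- fst x"] by auto
  qed
qed

section \<open>The Aubin property\<close>

lemma branch_height_le:
  assumes "0 \<le> a" "a \<le> 1/10" shows "branch_height a \<le> 11/20 * a"
  using assms mult_left_mono[of a "1/10" a] by (simp add: branch_height_def power2_eq_square)

lemma branch_height_lipschitz: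
  assumes "0 \<le> a" "a \<le> 1/10" "0 \<le> b" "b \<le> 1/10"
  shows "\<bar>branch_height a - branch_height b\<bar> \<le> 3/5 * \<bar>a - b\<bar>"
proof -
  have "branch_height a - branch_height b = (a - b) * ((1 + a + b) / 2)"
    by (simp add: branch_height_def power2_eq_square field_simps)
  then have "\<bar>branch_height a - branch_height b\<bar> = \<bar>a - b\<bar> * \<bar>(1 + a + b) / 2\<bar>"
    by (simp only: abs_mult)
  also have "\<dots> = \<bar>a - b\<bar> * ((1 + a + b) / 2)" using assms by simp
  also have "\<dots> \<le> \<bar>a - b\<bar> * (3/5)" using assms by (intro mult_left_mono) auto
  finally show ?thesis by simp
qed

lemma branch_mult_lipschitz:
  assumes \<sigma>: "\<sigma> \<in> {-1, 1}" and ab: "0 \<le> a" "a \<le> 1/10" "0 \<le> b" "b \<le> 1/10"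
  shows "\<bar>branch_mult \<sigma> a - branch_mult \<sigma> b\<bar> \<le> 7/10 * \<bar>a - b\<bar>"
proof -
  let ?ha = "branch_height a" and ?hb = "branch_height b"
  have "branch_mult \<sigma> a - branch_mult \<sigma> b = (?ha - ?hb) * (1 - \<sigma> * (?ha + ?hb))"
    by (simp add: branch_mult_def power2_eq_square algebra_simps)
  then have "\<bar>branch_mult \<sigma> a - branch_mult \<sigma> b\<bar> = \<bar>?ha - ?hb\<bar> * \<bar>1 - \<sigma> * (?ha + ?hb)\<bar>"
    by (simp only: abs_mult)
  also have "\<dots> \<le> (3/5 * \<bar>a - b\<bar>) * (7/6)"
  proof (intro mult_mono)
    show "\<bar>1 - \<sigma> * (?ha + ?hb)\<bar> \<le> 7/6"
      using \<sigma> ab branch_height_le[of a] branch_height_le[of b] branch_height_nonneg[of a]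
        branch_height_nonneg[of b] by auto
  qed (use branch_height_lipschitz[OF ab] in auto)
  finally show ?thesis by simp
qed

lemma branch_mult_le:
  assumes "\<sigma> \<in> {-1, 1}" "0 \<le> a" "a \<le> 1/10" shows "branch_mult \<sigma> a \<le> 3/50"
proof -
  have h: "0 \<le> branch_height a" "branch_height a \<le> 11/200"
    using assms branch_height_nonneg branch_height_le[of a] by auto
  then have "branch_height a * branch_height a \<le> 11/200 * (11/200)" by (intro mult_mono) auto
  moreover have "branch_mult \<sigma> a \<le> branch_height a + branch_height a * branch_height a"
    using assms(1) by (auto simp: branch_mult_def power2_eq_square)
  ultimately show ?thesis using h by linarith
qed

text \<open>This makes branch_param \<sigma> a perturbation of a \<mapsto> -a, invertible with Lipschitz inverse.\<close>
lemma branch_correction_lipschitz: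
  assumes \<sigma>: "\<sigma> \<in> {-1, 1}" and ab: "0 \<le> a" "a \<le> 1/10" "0 \<le> b" "b \<le> 1/10"
  shows "\<bar>branch_mult \<sigma> a * (1/2 + a) - branch_mult \<sigma> b * (1/2 + b)\<bar> \<le> 1/2 * \<bar>a - b\<bar>"
proof -
  let ?ma = "branch_mult \<sigma> a" and ?mb = "branch_mult \<sigma> b"
  have mb: "0 \<le> ?mb" "?mb \<le> 3/50"
    using branch_mult_nonneg[OF \<sigma>] branch_mult_le[OF \<sigma>] ab by auto
  have "?ma * (1/2 + a) - ?mb * (1/2 + b) = (?ma - ?mb) * (1/2 + a) + ?mb * (a - b)"
    by (simp add: algebra_simps)
  then have "\<bar>?ma * (1/2 + a) - ?mb * (1/2 + b)\<bar> \<le> \<bar>?ma - ?mb\<bar> * (1/2 + a) + ?mb * \<bar>a - b\<bar>"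
    using ab mb abs_triangle_ineq[of "(?ma - ?mb) * (1/2 + a)" "?mb * (a - b)"]
    by (simp add: abs_mult)
  also have "\<dots> \<le> (7/10 * \<bar>a - b\<bar>) * (3/5) + 3/50 * \<bar>a - b\<bar>"
    using ab mb branch_mult_lipschitz[OF \<sigma> ab] by (intro add_mono mult_mono) auto
  also have "\<dots> \<le> 1/2 * \<bar>a - b\<bar>" by simp
  finally show ?thesis .
qed

lemma branch_param_inverse_lipschitz:
  assumes "\<sigma> \<in> {-1, 1}" "0 \<le> a" "a \<le> 1/10" "0 \<le> b" "b \<le> 1/10"
  shows "\<bar>a - b\<bar> \<le> 2 * \<bar>branch_param \<sigma> a - branch_param \<sigma> b\<bar>"
proof -
  have "a - b = (branch_param \<sigma> b - branch_param \<sigma> a)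
      + (branch_mult \<sigma> a * (1/2 + a) - branch_mult \<sigma> b * (1/2 + b))"
    by (simp add: branch_param_def)
  then have "\<bar>a - b\<bar> \<le> \<bar>branch_param \<sigma> a - branch_param \<sigma> b\<bar>
      + \<bar>branch_mult \<sigma> a * (1/2 + a) - branch_mult \<sigma> b * (1/2 + b)\<bar>"
    by (metis abs_minus_commute abs_triangle_ineq)
  also have "\<dots> \<le> \<bar>branch_param \<sigma> a - branch_param \<sigma> b\<bar> + 1/2 * \<bar>a - b\<bar>"
    using branch_correction_lipschitz[OF assms] by (rule add_left_mono)
  finally show ?thesis by simp
qed

lemma branch_param_bounds:
  assumes "\<sigma> \<in> {-1, 1}" "0 \<le> a" "a \<le> 1/10"
  shows "- a \<le> branch_param \<sigma> a" "branch_param \<sigma> a \<le> - a / 2"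
  using branch_correction_lipschitz[OF assms, of 0] branch_mult_nonneg[OF assms(1,2)] assms(2,3)
  by (auto simp: branch_param_def branch_mult_def branch_height_def)

lemma branch_param_surj:
  assumes "\<sigma> \<in> {-1, 1}" "- 1/20 < p" "p \<le> 0"
  obtains a where "0 \<le> a" "a \<le> 1/10" "branch_param \<sigma> a = p"
proof -
  have "branch_param \<sigma> (1/10) \<le> p" "p \<le> branch_param \<sigma> 0"
    using branch_param_bounds[OF assms(1), of "1/10"] assms
    by (auto simp: branch_param_def branch_mult_def branch_height_def)
  moreover have "continuous_on {0..1/10} (branch_param \<sigma>)"
    unfolding branch_param_def branch_mult_def branch_height_def by (auto intro!: continuous_intros)
  ultimately show ?thesis using IVT2'[of "branch_param \<sigma>" "1/10" p 0] that by auto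
qed

lemma branch_point_dist:
  assumes "\<sigma> \<in> {-1, 1}" "0 \<le> a" "a \<le> 1/10" "0 \<le> b" "b \<le> 1/10"
  shows "norm (branch_point \<sigma> a - branch_point \<sigma> b) \<le> 2 * \<bar>a - b\<bar>"
proof -
  have "norm (branch_point \<sigma> a - branch_point \<sigma> b) \<le> \<bar>b - a\<bar> + \<bar>branch_height a - branch_height b\<bar>"
    using assms(1) norm_Pair_le[of "b - a" "\<sigma> * (branch_height a - branch_height b)"]
    by (auto simp: branch_point_def right_diff_distrib)
  also have "\<dots> \<le> \<bar>a - b\<bar> + 3/5 * \<bar>a - b\<bar>"
    using branch_height_lipschitz[OF assms(2-)] by (simp add: abs_minus_commute)
  also have "\<dots> \<le> 2 * \<bar>a - b\<bar>" by simp
  finally show ?thesis .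
qed

lemma branch_point_zero: "branch_point \<sigma> 0 = (0, 0)"
  by (simp add: branch_point_def branch_height_def)

lemma branch_param_zero: "branch_param \<sigma> 0 = 0"
  by (simp add: branch_param_def branch_mult_def branch_height_def)

lemma S9_near_origin_lipschitz:
  assumes x: "x \<in> S9 p1" "norm x < 1/10" and p2: "\<bar>p2\<bar> < 1/20"
  shows "\<exists>y \<in> S9 p2. norm (x - y) \<le> 4 * \<bar>p1 - p2\<bar>"
  using x
proof (cases rule: S9_near_origin_cases)
  case 1
  have "norm (x - (min p2 0, 0)) \<le> 4 * \<bar>p1 - p2\<bar>" using 1 by (auto simp: min_def)
  then show ?thesis using min_zero_mem_S9 by blast
next
  case (2 \<sigma> a)
  have "- 1/20 < min p2 0" "min p2 0 \<le> 0" using p2 by auto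
  then obtain c where c: "0 \<le> c" "c \<le> 1/10" "branch_param \<sigma> c = min p2 0"
    by (rule branch_param_surj[OF 2(1)])
  have "norm (x - branch_point \<sigma> c) \<le> 2 * \<bar>a - c\<bar>"
    using branch_point_dist[OF 2(1), of a c] 2 c by auto
  also have "\<dots> \<le> 4 * \<bar>p1 - min p2 0\<bar>"
    using branch_param_inverse_lipschitz[OF 2(1), of a c] 2 c by auto
  also have "\<dots> \<le> 4 * \<bar>p1 - p2\<bar>"
    using branch_param_bounds(2)[OF 2(1), of a] 2 by (auto simp: min_def)
  finally have "norm (x - branch_point \<sigma> c) \<le> 4 * \<bar>p1 - p2\<bar>" .
  moreover have "branch_point \<sigma> c \<in> S9 p2"
  proof (cases "p2 < 0")
    case True then show ?thesis using branch_point_mem_S9[OF 2(1), of c] c by simp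
  next
    case False
    then have "c = 0"
      using branch_param_inverse_lipschitz[OF 2(1) c(1,2), of 0] c by (simp add: branch_param_zero)
    then show ?thesis using min_zero_mem_S9[of p2] False by (simp add: branch_point_zero)
  qed
  ultimately show ?thesis by blast
qed

lemma aubin_property_S9: "aubin_property S9 0 (0, 0)"
  unfolding aubin_property_def
proof (intro exI conjI ballI)
  fix p1 p2 :: real and x assume "p1 \<in> ball 0 (1/20)" "p2 \<in> ball 0 (1/20)"
    and x: "x \<in> S9 p1 \<inter> ball (0, 0) (1/10)"
  have "norm x < 1/10" using x by (simp add: dist_norm zero_prod_def[symmetric])
  with x \<open>p2 \<in> ball 0 (1/20)\<close> show "\<exists>y\<in>S9 p2. norm (x - y) \<le> 4 * norm (p1 - p2)"
    using S9_near_origin_lipschitz by auto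
qed auto

section \<open>The graphical derivative at the origin\<close>

definition DS9 :: "real \<Rightarrow> (real \<times> real) set" where
  "DS9 q = (if q \<le> 0 then {(q, 0), (4/3 * q, - (2/3) * q), (4/3 * q, 2/3 * q)} else {(0, 0)})"

definition branch_gap :: "real \<Rightarrow> real \<Rightarrow> real \<times> real \<Rightarrow> real" where
  "branch_gap \<sigma> p x = \<bar>fst x - 4/3 * p\<bar> + \<bar>snd x + \<sigma> * (2/3) * p\<bar> + max p 0"

text \<open>A positively homogeneous, continuous measure of the distance of (p, x) from the graph of DS9,
  which consists of the trivial branch (min p 0, 0) and the two rays along which branch_gap vanishes.\<close>
definition DS9_gap :: "real \<Rightarrow> real \<times> real \<Rightarrow> real" where
  "DS9_gap p x = min (\<bar>fst x - min p 0\<bar> + \<bar>snd x\<bar>) (min (branch_gap (-1) p x) (branch_gap 1 p x))"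

lemma DS9_gap_nonneg: "0 \<le> DS9_gap p x"
  by (simp add: DS9_gap_def branch_gap_def)

lemma branch_gap_scale:
  assumes "0 < t" shows "branch_gap \<sigma> (t * p) (t *\<^sub>R x) = t * branch_gap \<sigma> p x"
proof -
  have e: "fst (t *\<^sub>R x) - 4/3 * (t * p) = t * (fst x - 4/3 * p)"
    "snd (t *\<^sub>R x) + \<sigma> * (2/3) * (t * p) = t * (snd x + \<sigma> * (2/3) * p)"
    "max (t * p) 0 = t * max p 0"
    using assms by (simp_all add: algebra_simps max_mult_distrib_left)
  show ?thesis unfolding branch_gap_def e abs_mult using assms by (simp add: algebra_simps)
qed

lemma DS9_gap_scale:
  assumes "0 < t" shows "DS9_gap (t * p) (t *\<^sub>R x) = t * DS9_gap p x"
proof -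
  have e: "fst (t *\<^sub>R x) - min (t * p) 0 = t * (fst x - min p 0)" "snd (t *\<^sub>R x) = t * snd x"
    using assms by (simp_all add: algebra_simps min_mult_distrib_left)
  show ?thesis unfolding DS9_gap_def branch_gap_scale[OF assms] e abs_mult using assms
    by (simp add: algebra_simps min_mult_distrib_left)
qed

lemma DS9_gap_eq_0: "DS9_gap p x = 0 \<Longrightarrow> x \<in> DS9 p"
  by (cases x) (auto simp: DS9_gap_def branch_gap_def DS9_def min_def max_def split: if_splits)

lemma tendsto_DS9_gap:
  "(f \<longlongrightarrow> p) F \<Longrightarrow> (g \<longlongrightarrow> x) F \<Longrightarrow> ((\<lambda>k. DS9_gap (f k) (g k)) \<longlongrightarrow> DS9_gap p x) F"
  unfolding DS9_gap_def branch_gap_def by (intro tendsto_intros)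

text \<open>The branch is tangent to the ray of branch_gap \<sigma> to second order.\<close>
lemma branch_gap_branch_point:
  assumes \<sigma>: "\<sigma> \<in> {-1, 1}" and a: "0 \<le> a" "a \<le> 1/10"
  shows "branch_gap \<sigma> (branch_param \<sigma> a) (branch_point \<sigma> a) \<le> 4 * a\<^sup>2"
proof -
  define h where "h = branch_height a"
  define E where "E = h\<^sup>2 * (1/2 + a)"
  have "h \<le> 11/20 * a" "0 \<le> h" using branch_height_le[OF a] branch_height_nonneg[OF a(1)]
    by (simp_all add: h_def)
  then have "h\<^sup>2 \<le> (11/20 * a)\<^sup>2" by (simp add: power_mono)
  then have "E \<le> (11/20 * a)\<^sup>2 * (3/5)" using a unfolding E_def by (intro mult_mono) auto
  also have "\<dots> = 363/2000 * a\<^sup>2" by (simp add: power2_eq_square)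
  also have "\<dots> \<le> a\<^sup>2 / 5" using zero_le_power2[of a] by linarith
  finally have E: "0 \<le> E" "E \<le> a\<^sup>2 / 5" using a by (simp_all add: E_def)
  have C: "0 \<le> a ^ 3" "a ^ 3 \<le> a\<^sup>2 / 10"
    using a mult_left_mono[of a "1/10" "a\<^sup>2"] by (simp_all add: power3_eq_cube power2_eq_square)
  have "fst (branch_point \<sigma> a) - 4/3 * branch_param \<sigma> a = - (a\<^sup>2 + 2/3 * a ^ 3 - 4/3 * (\<sigma> * E))"
    "snd (branch_point \<sigma> a) + \<sigma> * (2/3) * branch_param \<sigma> a = \<sigma> * (a\<^sup>2 + 1/3 * a ^ 3 - 2/3 * (\<sigma> * E))"
    using \<sigma> by (auto simp: branch_point_def branch_param_def branch_mult_def E_def h_def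
        branch_height_def power2_eq_square power3_eq_cube field_simps)
  moreover have "max (branch_param \<sigma> a) 0 = 0" using branch_param_bounds(2)[OF \<sigma> a] a by simp
  moreover have "\<bar>a\<^sup>2 + 2/3 * a ^ 3 - 4/3 * (\<sigma> * E)\<bar> \<le> 2 * a\<^sup>2"
    "\<bar>a\<^sup>2 + 1/3 * a ^ 3 - 2/3 * (\<sigma> * E)\<bar> \<le> 2 * a\<^sup>2"
  proof -
    have "- E \<le> \<sigma> * E" "\<sigma> * E \<le> E" using \<sigma> E by auto
    then show "\<bar>a\<^sup>2 + 2/3 * a ^ 3 - 4/3 * (\<sigma> * E)\<bar> \<le> 2 * a\<^sup>2"
      "\<bar>a\<^sup>2 + 1/3 * a ^ 3 - 2/3 * (\<sigma> * E)\<bar> \<le> 2 * a\<^sup>2"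
      unfolding abs_le_iff using E C by (intro conjI; linarith)+
  qed
  ultimately show ?thesis using \<sigma> by (auto simp: branch_gap_def abs_mult)
qed

lemma DS9_gap_S9_le:
  assumes x: "x \<in> S9 p" "norm x < 1/10"
  shows "DS9_gap p x \<le> 4 * (norm x)\<^sup>2"
  using x
proof (cases rule: S9_near_origin_cases)
  case 1
  then show ?thesis by (simp add: DS9_gap_def branch_gap_def)
next
  case (2 \<sigma> a)
  have "DS9_gap p x \<le> branch_gap \<sigma> p x" using 2(1) by (auto simp: DS9_gap_def)
  also have "\<dots> \<le> 4 * a\<^sup>2" using branch_gap_branch_point[OF 2(1), of a] 2 by simp
  also have "\<dots> \<le> 4 * (norm x)\<^sup>2"
    using 2 norm_fst_le[of "fst x" "snd x"] by (auto simp: branch_point_def intro!: power_mono)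
  finally show ?thesis .
qed

lemma graphical_derivative_S9_subset:
  assumes "u \<in> graphical_derivative S9 0 (0, 0) q" shows "u \<in> DS9 q"
proof -
  obtain t P X where t: "\<forall>k. 0 < t k" "t \<longlonglongrightarrow> 0"
    and lim: "(\<lambda>k. (1 / t k) *\<^sub>R (P k - 0)) \<longlonglongrightarrow> q" "(\<lambda>k. (1 / t k) *\<^sub>R (X k - (0, 0))) \<longlonglongrightarrow> u"
    and mem: "\<forall>k. X k \<in> S9 (P k)"
    using assms unfolding graphical_derivative_iff by (elim exE conjE) (rule that; assumption)
  define w where "w = (\<lambda>k. (1 / t k) *\<^sub>R X k)"
  have w: "w \<longlonglongrightarrow> u" using lim(2) by (simp add: w_def zero_prod_def[symmetric])
  have X: "X k = t k *\<^sub>R w k" for k using t(1) by (simp add: w_def less_imp_neq[symmetric])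
  have "(\<lambda>k. X k) \<longlonglongrightarrow> 0" unfolding X using tendsto_scaleR[OF t(2) w] by simp
  then have "eventually (\<lambda>k. norm (X k) < 1/10) sequentially"
    by (intro order_tendstoD(2)[OF tendsto_norm_zero]) auto
  then have ev: "eventually (\<lambda>k. DS9_gap (P k / t k) (w k) \<le> 4 * t k * (norm (w k))\<^sup>2) sequentially"
  proof (rule eventually_mono)
    fix k assume "norm (X k) < 1/10"
    then have "DS9_gap (P k) (X k) \<le> 4 * (norm (X k))\<^sup>2" using mem DS9_gap_S9_le by blast
    moreover have "DS9_gap (P k) (X k) = t k * DS9_gap (P k / t k) (w k)"
      using DS9_gap_scale[of "t k" "P k / t k" "w k"] t(1) by (simp add: X less_imp_neq[symmetric])
    moreover have "(norm (X k))\<^sup>2 = t k * (t k * (norm (w k))\<^sup>2)"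
      using t(1) by (simp add: X power_mult_distrib power2_eq_square)
    ultimately have "t k * DS9_gap (P k / t k) (w k) \<le> t k * (4 * t k * (norm (w k))\<^sup>2)"
      by (simp add: algebra_simps)
    then show "DS9_gap (P k / t k) (w k) \<le> 4 * t k * (norm (w k))\<^sup>2" using t(1) by simp
  qed
  have gap: "(\<lambda>k. DS9_gap (P k / t k) (w k)) \<longlonglongrightarrow> DS9_gap q u"
    using lim(1) w by (intro tendsto_DS9_gap) (simp add: divide_inverse mult.commute)
  have bound: "(\<lambda>k. 4 * t k * (norm (w k))\<^sup>2) \<longlonglongrightarrow> 4 * 0 * (norm u)\<^sup>2"
    using t(2) w by (intro tendsto_intros)
  have "DS9_gap q u \<le> 4 * 0 * (norm u)\<^sup>2"
    using tendsto_le[OF trivial_limit_sequentially bound gap ev] .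
  then show ?thesis using DS9_gap_nonneg[of q u] DS9_gap_eq_0 by (simp add: order_antisym)
qed

lemma trivial_direction_mem_graphical_derivative:
  "(min q 0, 0) \<in> graphical_derivative S9 0 (0, 0) q"
proof (rule graphical_derivative_ray)
  fix t :: real assume "0 < t"
  then have "(0, 0) + t *\<^sub>R (min q 0, 0) = (min (t * q) 0, 0)" by (simp add: min_mult_distrib_left)
  then show "(0, 0) + t *\<^sub>R (min q 0, 0) \<in> S9 (0 + t *\<^sub>R q)" using min_zero_mem_S9 by simp
qed

lemma branch_tangent_mem_graphical_derivative:
  assumes \<sigma>: "\<sigma> \<in> {-1, 1}" and "q \<le> 0"
  shows "(4/3 * q, - \<sigma> * (2/3) * q) \<in> graphical_derivative S9 0 (0, 0) q"
proof -
  define c where "c = - 4/3 * q"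
  have c: "0 \<le> c" using \<open>q \<le> 0\<close> by (simp add: c_def)
  define t where "t k = inverse (2 * (c + 1)) * inverse (real (Suc k))" for k
  have t: "0 < t k" for k using c by (simp add: t_def)
  have "t \<longlonglongrightarrow> 0" unfolding t_def by (intro tendsto_mult_right_zero LIMSEQ_inverse_real_of_nat)
  have "c * t k \<le> 1/2" for k
  proof -
    have "(c + 1) * real (Suc k) = c + 1 + (c + 1) * real k" by (simp add: algebra_simps)
    moreover have "0 \<le> (c + 1) * real k" using c by simp
    ultimately have "c / ((c + 1) * real (Suc k)) \<le> 1" using c by (simp only: pos_divide_le_eq) simp
    moreover have "c * t k = c / ((c + 1) * real (Suc k)) / 2" using c by (simp add: t_def field_simps)
    ultimately show ?thesis by simp
  qed
  then have mem: "branch_point \<sigma> (c * t k) \<in> S9 (branch_param \<sigma> (c * t k))" for k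
    using branch_point_mem_S9[OF \<sigma>] c t[of k] by simp
  have X: "(1 / t k) *\<^sub>R (branch_point \<sigma> (c * t k) - (0, 0)) = (- c, \<sigma> * (c * (1 + c * t k) / 2))"
    and P: "(1 / t k) *\<^sub>R (branch_param \<sigma> (c * t k) - 0) = - c + c * (1 + c * t k) / 2
      * (1 - \<sigma> * ((c * t k + (c * t k)\<^sup>2) / 2)) * (1/2 + c * t k)" for k
    using t[of k] by (simp_all add: branch_point_def branch_param_def branch_mult_def branch_height_def
        power2_eq_square field_simps)
  have "(\<lambda>k. (- c, \<sigma> * (c * (1 + c * t k) / 2))) \<longlonglongrightarrow> (- c, \<sigma> * (c * (1 + c * 0) / 2))"
    by (intro tendsto_intros \<open>t \<longlonglongrightarrow> 0\<close>) simp_all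
  then have "(\<lambda>k. (1 / t k) *\<^sub>R (branch_point \<sigma> (c * t k) - (0, 0))) \<longlonglongrightarrow> (4/3 * q, - \<sigma> * (2/3) * q)"
    unfolding X by (simp add: c_def mult.assoc)
  moreover have "(\<lambda>k. - c + c * (1 + c * t k) / 2 * (1 - \<sigma> * ((c * t k + (c * t k)\<^sup>2) / 2))
      * (1/2 + c * t k)) \<longlonglongrightarrow> - c + c * (1 + c * 0) / 2 * (1 - \<sigma> * ((c * 0 + (c * 0)\<^sup>2) / 2))
      * (1/2 + c * 0)"
    by (intro tendsto_intros \<open>t \<longlonglongrightarrow> 0\<close>) simp_all
  then have "(\<lambda>k. (1 / t k) *\<^sub>R (branch_param \<sigma> (c * t k) - 0)) \<longlonglongrightarrow> q"
    unfolding P by (simp add: c_def)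
  ultimately show ?thesis unfolding graphical_derivative_iff using t \<open>t \<longlonglongrightarrow> 0\<close> mem
    by (intro exI[of _ t] exI[of _ "\<lambda>k. branch_param \<sigma> (c * t k)"]
        exI[of _ "\<lambda>k. branch_point \<sigma> (c * t k)"]) auto
qed

lemma DS9_subset_graphical_derivative: "DS9 q \<subseteq> graphical_derivative S9 0 (0, 0) q"
proof (cases "q \<le> 0")
  case True
  then show ?thesis
    using trivial_direction_mem_graphical_derivative[of q]
      branch_tangent_mem_graphical_derivative[of 1 q] branch_tangent_mem_graphical_derivative[of "-1" q]
    by (auto simp: DS9_def min_absorb1)
next
  case False
  then show ?thesis using trivial_direction_mem_graphical_derivative[of q] by (simp add: DS9_def)
qed

lemma graphical_derivative_S9: "graphical_derivative S9 0 (0, 0) q = DS9 q"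
  using graphical_derivative_S9_subset DS9_subset_graphical_derivative by blast

lemma convex_normal_cone_nonpos_orthant_iff:
  "\<xi> \<in> convex_normal_cone nonpos_orthant y \<longleftrightarrow> fst y \<le> 0 \<and> snd y \<le> 0 \<and>
     0 \<le> fst \<xi> \<and> 0 \<le> snd \<xi> \<and> fst \<xi> * fst y = 0 \<and> snd \<xi> * snd y = 0"
proof -
  obtain y1 y2 a b where y: "y = (y1, y2)" and \<xi>: "\<xi> = (a, b)" by (cases y, cases \<xi>)
  have "(\<forall>z1 z2. z1 \<le> 0 \<longrightarrow> z2 \<le> 0 \<longrightarrow> a * (z1 - y1) + b * (z2 - y2) \<le> 0) \<longleftrightarrow>
      0 \<le> a \<and> 0 \<le> b \<and> a * y1 = 0 \<and> b * y2 = 0" if "y1 \<le> 0" "y2 \<le> 0"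
  proof
    assume h: "\<forall>z1 z2. z1 \<le> 0 \<longrightarrow> z2 \<le> 0 \<longrightarrow> a * (z1 - y1) + b * (z2 - y2) \<le> 0"
    from h[rule_format, of "y1 - 1" y2] h[rule_format, of y1 "y2 - 1"] that
    have "0 \<le> a" "0 \<le> b" by simp_all
    moreover from h[rule_format, of 0 y2] h[rule_format, of y1 0] that
    have "0 \<le> a * y1" "0 \<le> b * y2" by simp_all
    moreover have "a * y1 \<le> 0" "b * y2 \<le> 0" using calculation(1,2) that
      by (simp_all add: mult_nonneg_nonpos)
    ultimately show "0 \<le> a \<and> 0 \<le> b \<and> a * y1 = 0 \<and> b * y2 = 0" by simp
  next
    assume "0 \<le> a \<and> 0 \<le> b \<and> a * y1 = 0 \<and> b * y2 = 0"
    then show "\<forall>z1 z2. z1 \<le> 0 \<longrightarrow> z2 \<le> 0 \<longrightarrow> a * (z1 - y1) + b * (z2 - y2) \<le> 0"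
      by (auto simp: right_diff_distrib intro!: add_nonpos_nonpos mult_nonneg_nonpos)
  qed
  then show ?thesis
    unfolding convex_normal_cone_def nonpos_orthant_def y \<xi> by (auto simp: inner_prod_def)
qed

lemma mem_DS9_iff_normal_cone_system:
  "u \<in> DS9 q \<longleftrightarrow> (\<exists>\<xi>::real \<times> real.
          0 = - q + fst u + (0.5 * fst \<xi> + 0.5 * snd \<xi>) \<and>
          0 = - snd u + (- fst \<xi> + snd \<xi>) \<and>
          \<xi> \<in> convex_normal_cone nonpos_orthant
                 (0.5 * fst u - snd u, 0.5 * fst u + snd u))"
proof
  assume "u \<in> DS9 q"
  then consider "u = (min q 0, 0)" | "q \<le> 0" "u = (4/3 * q, - (2/3) * q)" | "q \<le> 0" "u = (4/3 * q, 2/3 * q)"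
    by (auto simp: DS9_def split: if_splits)
  then show "\<exists>\<xi>. 0 = - q + fst u + (0.5 * fst \<xi> + 0.5 * snd \<xi>) \<and> 0 = - snd u + (- fst \<xi> + snd \<xi>) \<and>
      \<xi> \<in> convex_normal_cone nonpos_orthant (0.5 * fst u - snd u, 0.5 * fst u + snd u)"
  proof cases
    case 1 then show ?thesis
      by (intro exI[of _ "(max q 0, max q 0)"]) (auto simp: convex_normal_cone_nonpos_orthant_iff)
  next
    case 2 then show ?thesis
      by (intro exI[of _ "(0, - (2/3) * q)"]) (auto simp: convex_normal_cone_nonpos_orthant_iff)
  next
    case 3 then show ?thesis
      by (intro exI[of _ "(- (2/3) * q, 0)"]) (auto simp: convex_normal_cone_nonpos_orthant_iff)
  qed
next
  assume "\<exists>\<xi>. 0 = - q + fst u + (0.5 * fst \<xi> + 0.5 * snd \<xi>) \<and> 0 = - snd u + (- fst \<xi> + snd \<xi>) \<and>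
      \<xi> \<in> convex_normal_cone nonpos_orthant (0.5 * fst u - snd u, 0.5 * fst u + snd u)"
  then obtain \<xi> where eqs: "0 = - q + fst u + (0.5 * fst \<xi> + 0.5 * snd \<xi>)" "0 = - snd u + (- fst \<xi> + snd \<xi>)"
    and "\<xi> \<in> convex_normal_cone nonpos_orthant (0.5 * fst u - snd u, 0.5 * fst u + snd u)"
    by blast
  then have c: "fst u / 2 - snd u \<le> 0" "fst u / 2 + snd u \<le> 0" "0 \<le> fst \<xi>" "0 \<le> snd \<xi>"
    "fst \<xi> = 0 \<or> fst u / 2 - snd u = 0" "snd \<xi> = 0 \<or> fst u / 2 + snd u = 0"
    by (auto simp: convex_normal_cone_nonpos_orthant_iff)
  from c(5,6) eqs c(1-4) show "u \<in> DS9 q"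
    by (cases u) (elim disjE; auto simp: DS9_def)
qed

theorem mainTheorem9:
  shows "aubin_property S9 0 (0, 0) \<and>
    (\<forall>q::real. graphical_derivative S9 0 (0, 0) q =
       {u. \<exists>\<xi>::real \<times> real.
          0 = - q + fst u + (0.5 * fst \<xi> + 0.5 * snd \<xi>) \<and>
          0 = - snd u + (- fst \<xi> + snd \<xi>) \<and>
          \<xi> \<in> convex_normal_cone nonpos_orthant
                 (0.5 * fst u - snd u, 0.5 * fst u + snd u)}) \<and>
    (\<forall>q::real. q \<le> 0 \<longrightarrow> graphical_derivative S9 0 (0, 0) q =
       {(q, 0), (4/3 * q, - (2/3) * q), (4/3 * q, 2/3 * q)}) \<and>
    (\<forall>q::real. q \<ge> 0 \<longrightarrow> graphical_derivative S9 0 (0, 0) q = {(0, 0)})"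
proof (intro conjI allI impI)
  fix q :: real
  show "graphical_derivative S9 0 (0, 0) q = {u. \<exists>\<xi>::real \<times> real.
          0 = - q + fst u + (0.5 * fst \<xi> + 0.5 * snd \<xi>) \<and>
          0 = - snd u + (- fst \<xi> + snd \<xi>) \<and>
          \<xi> \<in> convex_normal_cone nonpos_orthant
                 (0.5 * fst u - snd u, 0.5 * fst u + snd u)}"
    unfolding graphical_derivative_S9 using mem_DS9_iff_normal_cone_system by blast
  show "q \<le> 0 \<Longrightarrow> graphical_derivative S9 0 (0, 0) q =
       {(q, 0), (4/3 * q, - (2/3) * q), (4/3 * q, 2/3 * q)}"
    by (simp add: graphical_derivative_S9 DS9_def)
  show "q \<ge> 0 \<Longrightarrow> graphical_derivative S9 0 (0, 0) q = {(0, 0)}"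
    by (cases "q = 0") (simp_all add: graphical_derivative_S9 DS9_def)
qed (rule aubin_property_S9)

end
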